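(* Let $G=(V,E)$ be a finite graph with boundary $B\subseteq V$, $|B|\ge2$. Let $d_1\le\cdots\le d_{|B|}$ be the degrees in $G$ of the boundary vertices, and let $d_1'\le\cdots\le d_{|B|}'$ be the degree sequence of the induced subgraph $G'=(B,E(B,B))$. Let $S_1=\sum_{i=1}^{|B|}d_i$, $S_2=\sum_{i=1}^{|B|}d_i^2$, $S_1'=\sum_{i=1}^{|B|}d_i'$. Then for $k=1,2,\ldots,|B|$, $$\sigma_k(G,B)\le\frac{1}{|B|}\left\{S_1+\sqrt{\frac{k-1}{|B|-k+1}\Big[|B|(S_2+S_1')-S_1^2\Big]}\right\}\le\frac{1}{|B|}\left\{S_1+\sqrt{\frac{k-1}{|B|-k+1}\Big[|B|(S_2+S_1)-S_1^2\Big]}\right\}.$$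
   Context: A boundary is $B\subseteq V$ with $|B|\ge2$. $E(B,B)$ is the set of edges of $G$ with both endpoints in $B$. Rayleigh quotient: $R(f)=\frac{\sum_{\{x,y\}\in E}(f(x)-f(y))^2}{\sum_{x\in B}f(x)^2}$ ($+\infty$ if $f|_B=0$); for $1\le k\le|B|$, $\sigma_k(G,B)=\min_{W\subseteq\mathbb{R}^V,\dim W=k}\max_{0\ne f\in W}R(f)$. *)

theory Defs
  imports "HOL-Analysis.Analysis"
begin

text \<open>A finite simple graph on the finite vertex type 'v (V = UNIV):
  edges are 2-element subsets of the vertex set.\<close>
definition simple_graph :: "'v set set \<Rightarrow> bool" where
  "simple_graph E \<longleftrightarrow> (\<forall>e\<in>E. card e = 2)"

definition degree :: "'v set set \<Rightarrow> 'v \<Rightarrow> nat" where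
  "degree E v = card {e\<in>E. v \<in> e}"

definition induced_edges :: "'v set set \<Rightarrow> 'v set \<Rightarrow> 'v set set" where
  "induced_edges E B = {e\<in>E. e \<subseteq> B}"

text \<open>Rayleigh quotient; +infinity if f vanishes on B.  Each edge {x,y}
  contributes (f x - f y)^2, written symmetrically over the ordered pairs.\<close>
definition rayleigh :: "('v::finite) set set \<Rightarrow> 'v set \<Rightarrow> (real^'v) \<Rightarrow> ereal" where
  "rayleigh E B f =
     (if (\<forall>x\<in>B. f $ x = 0) then \<infinity>
      else ereal ((\<Sum>e\<in>E. (\<Sum>(x,y)\<in>{(x,y). x \<in> e \<and> y \<in> e \<and> x \<noteq> y}. (f $ x - f $ y)^2) / 2)
                  / (\<Sum>x\<in>B. (f $ x)^2)))"

definition steklov_eig :: "('v::finite) set set \<Rightarrow> 'v set \<Rightarrow> nat \<Rightarrow> ereal" where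
  "steklov_eig E B k =
     (INF W\<in>{W :: (real^'v) set. subspace W \<and> dim W = k}.
        (SUP f\<in>W - {0}. rayleigh E B f))"

end

theory Submission
  imports Defs
begin

(* On functions vanishing off B the Rayleigh quotient is f . L_B f / f . f, where L_B is the
   B x B block of the graph Laplacian D - A.  Taking W to be the span of k orthonormal eigenvectors
   of L_B whose eigenvalues are at most t therefore gives sigma_k <= t.  The eigenvalues of L_B sum
   to tr L_B = S1 and their squares to tr L_B^2 = S2 + S1'; if fewer than k of them were at most the
   stated bound, Cauchy-Schwarz applied separately to the deviations from the mean above and below
   it would force the variance to exceed itself (a Wolkowicz-Styan argument).  The second
   inequality is just S1' <= S1. *)

section \<open>Orthonormal eigenbases of self-adjoint operators\<close>

definition orthonormal_basis :: "'a::real_inner set \<Rightarrow> 'a set \<Rightarrow> bool" where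
  "orthonormal_basis S U \<longleftrightarrow>
     U \<subseteq> S \<and> S \<subseteq> span U \<and> pairwise orthogonal U \<and> (\<forall>u\<in>U. norm u = 1)"

definition orthonormal_eigenbasis :: "('a::real_inner \<Rightarrow> 'a) \<Rightarrow> 'a set \<Rightarrow> 'a set \<Rightarrow> bool" where
  "orthonormal_eigenbasis A S U \<longleftrightarrow> orthonormal_basis S U \<and> (\<forall>u\<in>U. A u = (u \<bullet> A u) *\<^sub>R u)"

lemma quadratic_nonneg_imp_linear_coeff_zero:
  fixes c d :: real
  assumes nonneg: "\<And>t. 0 \<le> 2*t*c + t^2 * d" and "0 \<le> d"
  shows "c = 0"
proof -
  define t where "t = -c / (d + 1)"
  have "t * (d + 1) = -c" unfolding t_def using \<open>0 \<le> d\<close> by simp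
  have "(d + 1)^2 * (2*t*c + t^2 * d) = 2*c*(t*(d + 1))*(d + 1) + (t*(d + 1))^2*d"
    by (simp add: algebra_simps power2_eq_square)
  also have "\<dots> = -(c^2 * (d + 2))"
    unfolding \<open>t * (d + 1) = -c\<close> by (simp add: algebra_simps power2_eq_square)
  finally have "(d + 1)^2 * (2*t*c + t^2 * d) = -(c^2 * (d + 2))" .
  moreover have "0 \<le> (d + 1)^2 * (2*t*c + t^2 * d)" using nonneg by simp
  ultimately have "c^2 * (d + 2) \<le> 0" by linarith
  then show "c = 0" using \<open>0 \<le> d\<close> by (simp add: mult_le_0_iff)
qed

lemma self_adjoint_unit_eigenvector:
  fixes A :: "'a::euclidean_space \<Rightarrow> 'a"
  assumes lin: "linear A" and sym: "\<And>x y. A x \<bullet> y = x \<bullet> A y"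
    and sub: "subspace S" and inv: "\<And>x. x \<in> S \<Longrightarrow> A x \<in> S" and nontriv: "S \<noteq> {0}"
  shows "\<exists>u\<in>S. norm u = 1 \<and> A u = (u \<bullet> A u) *\<^sub>R u"
proof -
  let ?K = "S \<inter> sphere 0 1"
  obtain z where z: "z \<in> S" "z \<noteq> 0" using nontriv sub subspace_0 by blast
  then have "(1 / norm z) *\<^sub>R z \<in> ?K" using sub by (auto simp: subspace_scale)
  moreover have "compact ?K" by (intro closed_Int_compact closed_subspace sub compact_sphere)
  moreover have "continuous_on ?K (\<lambda>x. x \<bullet> A x)"
    using lin by (intro continuous_intros linear_continuous_on)
      (simp add: linear_conv_bounded_linear)
  ultimately obtain u where u: "u \<in> ?K" and min: "\<And>y. y \<in> ?K \<Longrightarrow> u \<bullet> A u \<le> y \<bullet> A y"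
    using continuous_attains_inf[of ?K "\<lambda>x. x \<bullet> A x"] by blast
  define l where "l = u \<bullet> A u"
  have uS: "u \<in> S" and uu: "u \<bullet> u = 1" using u by (auto simp: norm_eq_1)
  have ge: "l * (x \<bullet> x) \<le> x \<bullet> A x" if "x \<in> S" for x
  proof (cases "x = 0")
    case True then show ?thesis using linear_0[OF lin] by simp
  next
    case False
    let ?y = "(1 / norm x) *\<^sub>R x"
    have "?y \<in> ?K" using \<open>x \<in> S\<close> False sub by (auto simp: subspace_scale)
    then have "l \<le> ?y \<bullet> A ?y" unfolding l_def by (rule min)
    also have "?y \<bullet> A ?y = (x \<bullet> A x) / (norm x)^2"
      using linear_cmul[OF lin] by (simp add: power2_eq_square)
    finally show ?thesis using False by (simp add: field_simps power2_norm_eq_inner)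
  qed
  define w where "w = A u - l *\<^sub>R u"
  have wS: "w \<in> S" unfolding w_def using uS inv sub by (auto intro: subspace_diff subspace_scale)
  have Auw: "u \<bullet> A w = w \<bullet> w + l * (u \<bullet> w)" "w \<bullet> A u = w \<bullet> w + l * (u \<bullet> w)"
    using sym[of u w] unfolding w_def
    by (simp_all add: inner_diff_left inner_diff_right inner_commute algebra_simps)
  \<comment> \<open>Perturbing the minimiser along w = A u - l u shows that w vanishes.\<close>
  have "0 \<le> 2*t*(w \<bullet> w) + t^2 * (w \<bullet> A w - l*(w \<bullet> w))" for t
  proof -
    let ?v = "u + t *\<^sub>R w"
    have "A ?v = A u + t *\<^sub>R A w" using lin by (simp add: linear_add linear_cmul)
    then have "?v \<bullet> A ?v - l * (?v \<bullet> ?v) = 2*t*(w \<bullet> w) + t^2 * (w \<bullet> A w - l*(w \<bullet> w))"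
      using uu Auw
      by (simp add: l_def inner_add_left inner_add_right power2_eq_square inner_commute
          algebra_simps)
    moreover have "l * (?v \<bullet> ?v) \<le> ?v \<bullet> A ?v"
      using uS wS sub by (intro ge subspace_add subspace_scale)
    ultimately show ?thesis by linarith
  qed
  moreover have "0 \<le> w \<bullet> A w - l*(w \<bullet> w)" using ge[OF wS] by simp
  ultimately have "w \<bullet> w = 0" by (rule quadratic_nonneg_imp_linear_coeff_zero)
  then have "A u = l *\<^sub>R u" unfolding w_def by simp
  then show ?thesis using uS u l_def by auto
qed

lemma self_adjoint_orthonormal_eigenbasis:
  fixes A :: "'a::euclidean_space \<Rightarrow> 'a"
  assumes lin: "linear A" and sym: "\<And>x y. A x \<bullet> y = x \<bullet> A y"
    and "subspace S" and "\<And>x. x \<in> S \<Longrightarrow> A x \<in> S"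
  shows "\<exists>U. orthonormal_eigenbasis A S U"
  using assms(3,4)
proof (induction "dim S" arbitrary: S rule: less_induct)
  case less
  note sub = less.prems(1) and inv = less.prems(2)
  show ?case
  proof (cases "S = {0}")
    case True
    then show ?thesis
      by (auto simp: orthonormal_eigenbasis_def orthonormal_basis_def intro!: exI[of _ "{}"])
  next
    case False
    then obtain u where uS: "u \<in> S" and nu: "norm u = 1" and eig: "A u = (u \<bullet> A u) *\<^sub>R u"
      using self_adjoint_unit_eigenvector[OF lin sym sub inv] by blast
    have uu: "u \<bullet> u = 1" using nu by (simp add: norm_eq_1)
    define S' where "S' = S \<inter> {x. u \<bullet> x = 0}"
    have sub': "subspace S'" unfolding S'_def by (intro subspace_inter sub subspace_hyperplane)
    have inv': "A x \<in> S'" if "x \<in> S'" for x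
    proof -
      have "u \<bullet> A x = A u \<bullet> x" using sym by simp
      also have "\<dots> = (u \<bullet> A u) * (u \<bullet> x)" by (subst eig) simp
      also have "\<dots> = 0" using that by (simp add: S'_def)
      finally show ?thesis using that inv by (simp add: S'_def)
    qed
    have "u \<notin> S'" using uu by (simp add: S'_def)
    then have "S' \<subset> S" using uS unfolding S'_def by blast
    then have "dim S' < dim S" using dim_psubset sub sub' by (metis span_eq_iff)
    then obtain U' where U': "orthonormal_eigenbasis A S' U'"
      using less.hyps sub' inv' by blast
    have "S \<subseteq> span (insert u U')"
    proof
      fix x assume "x \<in> S"
      then have "x - (u \<bullet> x) *\<^sub>R u \<in> S'" using uS sub uu
        by (auto simp: S'_def inner_diff_right intro: subspace_diff subspace_scale)
      then have "x - (u \<bullet> x) *\<^sub>R u \<in> span (insert u U')"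
        using U' span_mono[of U' "insert u U'"]
        by (auto simp: orthonormal_eigenbasis_def orthonormal_basis_def)
      moreover have "(u \<bullet> x) *\<^sub>R u \<in> span (insert u U')" by (simp add: span_base span_scale)
      ultimately show "x \<in> span (insert u U')" using span_add by fastforce
    qed
    moreover have "pairwise orthogonal (insert u U')"
      using U' by (intro pairwise_orthogonal_insert)
        (auto simp: orthonormal_eigenbasis_def orthonormal_basis_def S'_def orthogonal_def)
    ultimately have "orthonormal_eigenbasis A S (insert u U')"
      using U' uS nu eig by (auto simp: orthonormal_eigenbasis_def orthonormal_basis_def S'_def)
    then show ?thesis ..
  qed
qed

lemma quadratic_form_le_on_span_eigenvectors:
  fixes A :: "'a::euclidean_space \<Rightarrow> 'a"
  assumes lin: "linear A" and fin: "finite U" and orth: "pairwise orthogonal U"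
    and nrm: "\<And>u. u \<in> U \<Longrightarrow> norm u = 1"
    and eig: "\<And>u. u \<in> U \<Longrightarrow> A u = lam u *\<^sub>R u"
    and le: "\<And>u. u \<in> U \<Longrightarrow> lam u \<le> t"
    and f: "f \<in> span U"
  shows "f \<bullet> A f \<le> t * (f \<bullet> f)"
proof -
  have expand: "(\<Sum>u\<in>U. (f \<bullet> u) *\<^sub>R u) = f"
    using orthonormal_basis_expand[OF orth _ f fin] nrm by blast
  have "A f = (\<Sum>u\<in>U. ((f \<bullet> u) * lam u) *\<^sub>R u)"
    by (subst expand[symmetric])
      (simp add: linear_sum[OF lin] linear_scale[OF lin] eig cong: sum.cong)
  then have "f \<bullet> A f = (\<Sum>u\<in>U. lam u * (f \<bullet> u)^2)"
    by (simp add: inner_sum_right power2_eq_square mult_ac)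
  also have "\<dots> \<le> (\<Sum>u\<in>U. t * (f \<bullet> u)^2)" by (intro sum_mono mult_right_mono le) auto
  also have "\<dots> = t * (f \<bullet> (\<Sum>u\<in>U. (f \<bullet> u) *\<^sub>R u))"
    by (simp add: inner_sum_right sum_distrib_left power2_eq_square)
  finally show ?thesis unfolding expand .
qed

section \<open>Counting values below a mean-plus-deviation threshold\<close>

lemma sum_subset_squared_le:
  fixes a :: "'a \<Rightarrow> real"
  assumes fin: "finite U" and HU: "H \<subseteq> U" and zero: "(\<Sum>u\<in>U. a u) = 0"
  shows "(\<Sum>u\<in>H. a u)^2 * card U \<le> card H * card (U - H) * (\<Sum>u\<in>U. (a u)^2)"
proof -
  define \<sigma> where "\<sigma> = (\<Sum>u\<in>H. a u)"
  have "(\<Sum>u\<in>U. a u) = (\<Sum>u\<in>U - H. a u) + \<sigma>"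
    unfolding \<sigma>_def using sum.subset_diff[OF HU fin] by simp
  then have "(\<Sum>u\<in>U - H. a u)^2 = \<sigma>^2" using zero by (simp add: eq_neg_iff_add_eq_0[symmetric])
  then have L: "\<sigma>^2 \<le> card (U - H) * (\<Sum>u\<in>U - H. (a u)^2)"
    using sum_squared_le_sum_of_squares[of a "U - H"] by (simp add: mult.commute)
  have H: "\<sigma>^2 \<le> card H * (\<Sum>u\<in>H. (a u)^2)"
    using sum_squared_le_sum_of_squares[of a H] by (simp add: \<sigma>_def mult.commute)
  have "card U = card H + card (U - H)"
    using HU fin by (simp add: card_Diff_subset finite_subset card_mono)
  then have "\<sigma>^2 * card U = card (U - H) * \<sigma>^2 + card H * \<sigma>^2" by (simp add: algebra_simps)
  also have "\<dots> \<le> card (U - H) * (card H * (\<Sum>u\<in>H. (a u)^2))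
                     + card H * (card (U - H) * (\<Sum>u\<in>U - H. (a u)^2))"
    using L H by (intro add_mono mult_left_mono) auto
  also have "\<dots> = card H * card (U - H) * (\<Sum>u\<in>U. (a u)^2)"
    using sum.subset_diff[OF HU fin, of "\<lambda>u. (a u)^2"] by (simp add: algebra_simps)
  finally show ?thesis unfolding \<sigma>_def .
qed

lemma card_centered_le_threshold:
  fixes a :: "'a \<Rightarrow> real" and x :: real
  assumes fin: "finite U" and k: "1 \<le> k" "k \<le> card U" and mean: "(\<Sum>u\<in>U. a u) = 0"
    and x0: "0 \<le> x"
    and x2: "x^2 * card U * (card U - real k + 1) = (real k - 1) * (\<Sum>u\<in>U. (a u)^2)"
  shows "k \<le> card {u\<in>U. a u \<le> x}"
proof (rule ccontr)
  define n where "n = real (card U)"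
  define V where "V = (\<Sum>u\<in>U. (a u)^2)"
  define L where "L = {u\<in>U. a u \<le> x}"
  define H where "H = U - L"
  define p where "p = real (card L)"
  define h where "h = real (card H)"
  have V0: "V \<ge> 0" and k0: "real k - 1 \<ge> 0" and nk: "n - real k + 1 > 0"
    using k by (auto simp: V_def n_def sum_nonneg)
  assume "\<not> ?thesis"
  then have pk: "p \<le> real k - 1" unfolding p_def L_def by simp
  have "card U = card L + card H"
    unfolding H_def L_def using fin by (simp add: card_Diff_subset card_mono)
  then have hk: "h \<ge> n - real k + 1" using pk unfolding h_def p_def n_def by simp
  then have "H \<noteq> {}" using nk unfolding h_def by auto
  then have "(\<Sum>u\<in>H. x) < (\<Sum>u\<in>H. a u)"
    using fin by (intro sum_strict_mono) (auto simp: H_def L_def)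
  then have "(h * x)^2 * n < (\<Sum>u\<in>H. a u)^2 * n"
    using x0 hk nk k by (intro mult_strict_right_mono power_strict_mono) (auto simp: h_def n_def)
  also have "\<dots> \<le> h * p * V"
    using sum_subset_squared_le[OF fin _ mean, of H] unfolding h_def p_def V_def
    by (simp add: H_def L_def n_def Diff_Diff_Int Int_absorb1)
  finally have lt: "h * (x^2 * n) < p * V"
    using hk nk by (simp add: power2_eq_square algebra_simps)
  have "h * (x^2 * n * (n - real k + 1)) < p * (n - real k + 1) * V"
    using mult_strict_right_mono[OF lt nk] by (simp add: ac_simps)
  also have "\<dots> \<le> (real k - 1) * h * V"
    using pk hk V0 nk k0 by (intro mult_right_mono mult_mono) auto
  finally have "h * (x^2 * n * (n - real k + 1)) < (real k - 1) * h * V" .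
  moreover have "h * (x^2 * n * (n - real k + 1)) = (real k - 1) * h * V"
    using x2 by (simp add: n_def V_def)
  ultimately show False by simp
qed

lemma wolkowicz_styan_card_le:
  fixes lam :: "'a \<Rightarrow> real"
  assumes fin: "finite U" and k: "1 \<le> k" "k \<le> card U"
  defines "n \<equiv> real (card U)"
  defines "T1 \<equiv> (\<Sum>u\<in>U. lam u)" and "T2 \<equiv> (\<Sum>u\<in>U. (lam u)^2)"
  shows "k \<le> card {u\<in>U. lam u
                      \<le> (T1 + sqrt ((real k - 1) / (n - real k + 1) * (n * T2 - T1^2))) / n}"
proof -
  have n0: "n > 0" and k0: "real k - 1 \<ge> 0" and nk: "n - real k + 1 > 0"
    using k unfolding n_def by auto
  define m where "m = T1 / n"
  define V where "V = (\<Sum>u\<in>U. (lam u - m)^2)"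
  define x where "x = sqrt ((real k - 1) / (n - real k + 1) * (n * V)) / n"
  have mean: "(\<Sum>u\<in>U. lam u - m) = 0"
    using n0 by (simp add: sum_subtractf m_def T1_def n_def)
  have "V = T2 - 2 * m * T1 + n * m^2"
    unfolding V_def T1_def T2_def n_def
    by (simp add: power2_diff sum.distrib sum_subtractf sum_distrib_left sum_distrib_right
        algebra_simps)
  then have "n * T2 - T1^2 = n * V" using n0 by (simp add: m_def field_simps power2_eq_square)
  then have t: "(T1 + sqrt ((real k - 1) / (n - real k + 1) * (n * T2 - T1^2))) / n = m + x"
    by (simp add: m_def x_def add_divide_distrib)
  have V0: "V \<ge> 0" unfolding V_def by (simp add: sum_nonneg)
  then have x0: "x \<ge> 0" using n0 k0 nk by (simp add: x_def)
  have "(x * n)^2 = (real k - 1) / (n - real k + 1) * (n * V)"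
    unfolding x_def using n0 k0 nk V0 by simp
  then have "n * (x^2 * n * (n - real k + 1)) = n * ((real k - 1) * V)"
    using nk by (simp add: power_mult_distrib field_simps power2_eq_square)
  then have "x^2 * n * (n - real k + 1) = (real k - 1) * V" using n0 by simp
  then have "k \<le> card {u\<in>U. lam u - m \<le> x}"
    using card_centered_le_threshold[OF fin k mean x0] by (simp add: n_def V_def)
  then show ?thesis unfolding t by (simp add: algebra_simps)
qed

section \<open>Operators given by a kernel on a subset of coordinates\<close>

definition supported_on :: "'v::finite set \<Rightarrow> (real^'v) set" where
  "supported_on B = {f. \<forall>x. x \<notin> B \<longrightarrow> f $ x = 0}"

definition block_op :: "('v \<Rightarrow> 'v \<Rightarrow> real) \<Rightarrow> 'v::finite set \<Rightarrow> real^'v \<Rightarrow> real^'v" where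
  "block_op M B f = (\<chi> x. if x \<in> B then \<Sum>y\<in>B. M x y * f $ y else 0)"

lemma subspace_supported_on: "subspace (supported_on B)"
  by (auto simp: subspace_def supported_on_def)

lemma sum_UNIV_eq_sum_vanishing_outside:
  fixes g :: "'v::finite \<Rightarrow> real"
  assumes "\<And>x. x \<notin> B \<Longrightarrow> g x = 0"
  shows "(\<Sum>x\<in>UNIV. g x) = (\<Sum>x\<in>B. g x)"
  by (rule sum.mono_neutral_right) (auto simp: assms)

lemma inner_supported_on:
  assumes "f \<in> supported_on B"
  shows "f \<bullet> g = (\<Sum>x\<in>B. f $ x * g $ x)"
  unfolding inner_vec_def inner_real_def using assms
  by (intro sum_UNIV_eq_sum_vanishing_outside) (simp add: supported_on_def)

lemma block_op_supported_on: "block_op M B f \<in> supported_on B"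
  by (simp add: supported_on_def block_op_def)

lemma linear_block_op: "linear (block_op M B)"
  by (rule linearI)
    (simp_all add: block_op_def vec_eq_iff sum.distrib sum_distrib_left algebra_simps)

lemma inner_block_op: "block_op M B f \<bullet> g = (\<Sum>x\<in>B. \<Sum>y\<in>B. M x y * f $ y * g $ x)"
  using inner_supported_on[OF block_op_supported_on, of M B f g]
  by (simp add: block_op_def sum_distrib_right)

lemma block_op_comp:
  "block_op M B (block_op N B f) = block_op (\<lambda>x z. \<Sum>y\<in>B. M x y * N y z) B f"
  by (auto simp: block_op_def vec_eq_iff sum_distrib_left sum_distrib_right mult.assoc
      intro: sum.swap)

lemma block_op_self_adjoint:
  assumes sym: "\<And>x y. x \<in> B \<Longrightarrow> y \<in> B \<Longrightarrow> M x y = M y x"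
  shows "block_op M B f \<bullet> g = f \<bullet> block_op M B g"
proof -
  have "block_op M B f \<bullet> g = (\<Sum>x\<in>B. \<Sum>y\<in>B. M x y * f $ y * g $ x)" by (rule inner_block_op)
  also have "\<dots> = (\<Sum>y\<in>B. \<Sum>x\<in>B. M y x * g $ x * f $ y)"
    by (subst sum.swap) (simp add: sym mult_ac cong: sum.cong)
  also have "\<dots> = block_op M B g \<bullet> f" by (rule inner_block_op[symmetric])
  finally show ?thesis by (simp add: inner_commute)
qed

lemma block_op_orthonormal_eigenbasis:
  assumes "\<And>x y. x \<in> B \<Longrightarrow> y \<in> B \<Longrightarrow> M x y = M y x"
  shows "\<exists>U. orthonormal_eigenbasis (block_op M B) (supported_on B) U"
  by (intro self_adjoint_orthonormal_eigenbasis linear_block_op block_op_self_adjoint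
      subspace_supported_on block_op_supported_on assms)

lemma orthonormal_basis_supported_on_coord_sum:
  assumes basis: "orthonormal_basis (supported_on B) U" and "y \<in> B"
  shows "(\<Sum>u\<in>U. u $ x * u $ y) = (if x = y then 1 else 0)"
proof -
  have "axis y 1 \<in> span U"
    using basis \<open>y \<in> B\<close> by (auto simp: orthonormal_basis_def supported_on_def axis_def)
  then have "(\<Sum>u\<in>U. (axis y 1 \<bullet> u) *\<^sub>R u) = axis y (1::real)"
    using basis by (intro orthonormal_basis_expand)
      (auto simp: orthonormal_basis_def pairwise_orthogonal_imp_finite)
  then have "(\<Sum>u\<in>U. (axis y 1 \<bullet> u) *\<^sub>R u) $ x = axis y (1::real) $ x" by simp
  then show ?thesis by (simp add: inner_axis' mult.commute) (simp add: axis_def)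
qed

lemma card_orthonormal_basis_supported_on:
  assumes basis: "orthonormal_basis (supported_on B) U"
  shows "card U = card B"
proof -
  have "real (card U) = (\<Sum>u\<in>U. u \<bullet> u)"
    using basis by (simp add: orthonormal_basis_def norm_eq_1)
  also have "\<dots> = (\<Sum>u\<in>U. \<Sum>x\<in>B. u $ x * u $ x)"
    using basis by (intro sum.cong refl inner_supported_on) (auto simp: orthonormal_basis_def)
  also have "\<dots> = (\<Sum>x\<in>B. \<Sum>u\<in>U. u $ x * u $ x)" by (rule sum.swap)
  also have "\<dots> = real (card B)" using orthonormal_basis_supported_on_coord_sum[OF basis] by simp
  finally show ?thesis by simp
qed

lemma trace_block_op:
  assumes basis: "orthonormal_basis (supported_on B) U"
  shows "(\<Sum>u\<in>U. u \<bullet> block_op M B u) = (\<Sum>x\<in>B. M x x)"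
proof -
  have "(\<Sum>u\<in>U. u \<bullet> block_op M B u) = (\<Sum>u\<in>U. \<Sum>x\<in>B. \<Sum>y\<in>B. M x y * (u $ y * u $ x))"
    by (simp add: inner_commute[of _ "block_op M B _"] inner_block_op mult.assoc)
  also have "\<dots> = (\<Sum>x\<in>B. \<Sum>y\<in>B. \<Sum>u\<in>U. M x y * (u $ y * u $ x))"
    by (subst sum.swap) (simp add: sum.swap[of _ U])
  also have "\<dots> = (\<Sum>x\<in>B. \<Sum>y\<in>B. M x y * (if y = x then 1 else 0))"
    by (simp add: sum_distrib_left[symmetric] orthonormal_basis_supported_on_coord_sum[OF basis])
  also have "\<dots> = (\<Sum>x\<in>B. M x x)" by (simp add: if_distrib cong: if_cong)
  finally show ?thesis .
qed

lemma sum_squared_eigenvalues_block_op: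
  assumes sym: "\<And>x y. x \<in> B \<Longrightarrow> y \<in> B \<Longrightarrow> M x y = M y x"
    and eig: "orthonormal_eigenbasis (block_op M B) (supported_on B) U"
  shows "(\<Sum>u\<in>U. (u \<bullet> block_op M B u)^2) = (\<Sum>x\<in>B. \<Sum>y\<in>B. (M x y)^2)"
proof -
  let ?A = "block_op M B"
  have "(u \<bullet> ?A u)^2 = u \<bullet> ?A (?A u)" if "u \<in> U" for u
  proof -
    have "?A u = (u \<bullet> ?A u) *\<^sub>R u" and "u \<bullet> u = 1"
      using eig that by (auto simp: orthonormal_eigenbasis_def orthonormal_basis_def norm_eq_1)
    then show ?thesis
      by (metis linear_cmul[OF linear_block_op] inner_scaleR_right mult.right_neutral
          power2_eq_square)
  qed
  then have "(\<Sum>u\<in>U. (u \<bullet> ?A u)^2) = (\<Sum>u\<in>U. u \<bullet> block_op (\<lambda>x z. \<Sum>y\<in>B. M x y * M y z) B u)"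
    by (simp add: block_op_comp)
  also have "\<dots> = (\<Sum>x\<in>B. \<Sum>y\<in>B. M x y * M y x)"
    using eig by (simp add: trace_block_op orthonormal_eigenbasis_def)
  also have "\<dots> = (\<Sum>x\<in>B. \<Sum>y\<in>B. (M x y)^2)"
    by (intro sum.cong refl) (simp add: sym power2_eq_square)
  finally show ?thesis .
qed

section \<open>The graph Laplacian\<close>

definition adjacency :: "'v set set \<Rightarrow> 'v \<Rightarrow> 'v \<Rightarrow> real" where
  "adjacency E x y = (if {x, y} \<in> E \<and> x \<noteq> y then 1 else 0)"

definition laplacian :: "'v set set \<Rightarrow> 'v \<Rightarrow> 'v \<Rightarrow> real" where
  "laplacian E x y = (if x = y then real (degree E x) else 0) - adjacency E x y"

lemma adjacency_commute: "adjacency E x y = adjacency E y x"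
  by (auto simp: adjacency_def insert_commute)

lemma adjacency_self [simp]: "adjacency E x x = 0"
  by (simp add: adjacency_def)

lemma laplacian_commute: "laplacian E x y = laplacian E y x"
  by (simp add: laplacian_def adjacency_commute)

lemma simple_graph_edge_eq:
  assumes "simple_graph E" "e \<in> E" "x \<in> e" "y \<in> e" "x \<noteq> y"
  shows "e = {x, y}"
proof -
  obtain a b where "e = {a, b}" "a \<noteq> b"
    using assms(1,2) by (auto simp: simple_graph_def card_2_iff)
  then show ?thesis using assms(3-5) by auto
qed

lemma card_edges_containing:
  assumes "simple_graph E"
  shows "real (card {e\<in>E. x \<in> e \<and> y \<in> e \<and> x \<noteq> y}) = adjacency E x y"
proof -
  have "{e\<in>E. x \<in> e \<and> y \<in> e \<and> x \<noteq> y} = (if {x, y} \<in> E \<and> x \<noteq> y then {{x, y}} else {})"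
    using simple_graph_edge_eq[OF assms] by auto
  then show ?thesis by (simp add: adjacency_def)
qed

lemma sum_edges_eq_sum_adjacency:
  fixes E :: "'v::finite set set" and h :: "'v \<Rightarrow> 'v \<Rightarrow> real"
  assumes "simple_graph E"
  shows "(\<Sum>e\<in>E. \<Sum>(x, y)\<in>{(x, y). x \<in> e \<and> y \<in> e \<and> x \<noteq> y}. h x y)
       = (\<Sum>x\<in>UNIV. \<Sum>y\<in>UNIV. adjacency E x y * h x y)"
proof -
  have pairs: "(\<Sum>(x, y)\<in>{(x, y). x \<in> e \<and> y \<in> e \<and> x \<noteq> y}. h x y)
      = (\<Sum>x\<in>UNIV. \<Sum>y\<in>UNIV. if x \<in> e \<and> y \<in> e \<and> x \<noteq> y then h x y else 0)" for e
  proof -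
    have "(\<Sum>x\<in>UNIV. \<Sum>y\<in>UNIV. if x \<in> e \<and> y \<in> e \<and> x \<noteq> y then h x y else 0)
        = (\<Sum>(x, y)\<in>UNIV. if x \<in> e \<and> y \<in> e \<and> x \<noteq> y then h x y else 0)"
      by (simp add: sum.cartesian_product)
    also have "\<dots> = (\<Sum>(x, y)\<in>{(x, y). x \<in> e \<and> y \<in> e \<and> x \<noteq> y}. h x y)"
      by (rule sum.mono_neutral_cong_right) (auto split: if_splits)
    finally show ?thesis ..
  qed
  have "(\<Sum>e\<in>E. \<Sum>x\<in>UNIV. \<Sum>y\<in>UNIV. if x \<in> e \<and> y \<in> e \<and> x \<noteq> y then h x y else 0)
      = (\<Sum>x\<in>UNIV. \<Sum>y\<in>UNIV. \<Sum>e\<in>E. if x \<in> e \<and> y \<in> e \<and> x \<noteq> y then h x y else 0)"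
    by (subst sum.swap) (simp add: sum.swap[of _ E])
  also have "\<dots> = (\<Sum>x\<in>UNIV. \<Sum>y\<in>UNIV. real (card {e\<in>E. x \<in> e \<and> y \<in> e \<and> x \<noteq> y}) * h x y)"
    by (simp add: sum.If_cases finite_subset[of E "Pow UNIV"] Int_def conj_ac)
  finally show ?thesis by (simp add: pairs card_edges_containing[OF assms])
qed

lemma degree_induced_edges_eq_sum_adjacency:
  fixes B :: "'v::finite set"
  assumes sg: "simple_graph E" and "v \<in> B"
  shows "real (degree (induced_edges E B) v) = (\<Sum>y\<in>B. adjacency E v y)"
proof -
  have "bij_betw (\<lambda>y. {v, y}) {y\<in>B. {v, y} \<in> E \<and> v \<noteq> y} {e\<in>induced_edges E B. v \<in> e}"
  proof (rule bij_betwI')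
    fix e assume e: "e \<in> {e\<in>induced_edges E B. v \<in> e}"
    then obtain y where "y \<in> e" "y \<noteq> v"
      using sg by (auto simp: induced_edges_def simple_graph_def card_2_iff)
    moreover have "e = {v, y}"
      using simple_graph_edge_eq[OF sg] e \<open>y \<in> e\<close> \<open>y \<noteq> v\<close> by (auto simp: induced_edges_def)
    ultimately show "\<exists>y\<in>{y\<in>B. {v, y} \<in> E \<and> v \<noteq> y}. e = {v, y}"
      using e by (auto simp: induced_edges_def)
  qed (use \<open>v \<in> B\<close> in \<open>auto simp: induced_edges_def doubleton_eq_iff\<close>)
  then have "degree (induced_edges E B) v = card {y\<in>B. {v, y} \<in> E \<and> v \<noteq> y}"
    by (simp add: degree_def bij_betw_same_card)
  then show ?thesis by (simp add: adjacency_def flip: sum.inter_filter)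
qed

lemma degree_eq_sum_adjacency:
  fixes E :: "'v::finite set set"
  assumes "simple_graph E"
  shows "real (degree E v) = (\<Sum>y\<in>UNIV. adjacency E v y)"
  using degree_induced_edges_eq_sum_adjacency[OF assms, of v UNIV] by (simp add: induced_edges_def)

lemma adjacency_energy_eq_laplacian_form:
  fixes E :: "'v::finite set set" and f :: "'v \<Rightarrow> real"
  assumes sg: "simple_graph E"
  shows "(\<Sum>x\<in>UNIV. \<Sum>y\<in>UNIV. adjacency E x y * (f x - f y)^2) / 2
       = (\<Sum>x\<in>UNIV. \<Sum>y\<in>UNIV. laplacian E x y * f x * f y)"
proof -
  let ?D = "\<Sum>x\<in>UNIV. real (degree E x) * (f x)^2"
  let ?C = "\<Sum>x\<in>UNIV. \<Sum>y\<in>UNIV. adjacency E x y * f x * f y"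
  have left: "(\<Sum>x\<in>UNIV. \<Sum>y\<in>UNIV. adjacency E x y * (f x)^2) = ?D"
    by (simp add: degree_eq_sum_adjacency[OF sg] sum_distrib_right)
  have right: "(\<Sum>x\<in>UNIV. \<Sum>y\<in>UNIV. adjacency E x y * (f y)^2) = ?D"
    by (subst sum.swap)
      (simp add: degree_eq_sum_adjacency[OF sg] sum_distrib_right adjacency_commute)
  have "(\<Sum>x\<in>UNIV. \<Sum>y\<in>UNIV. adjacency E x y * (f x - f y)^2)
      = (\<Sum>x\<in>UNIV. \<Sum>y\<in>UNIV. adjacency E x y * (f x)^2)
        + (\<Sum>x\<in>UNIV. \<Sum>y\<in>UNIV. adjacency E x y * (f y)^2) - 2 * ?C"
    by (simp add: power2_diff algebra_simps sum.distrib sum_subtractf sum_distrib_left)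
  also have "\<dots> = 2 * (?D - ?C)" unfolding left right by simp
  also have "?D - ?C = (\<Sum>x\<in>UNIV. \<Sum>y\<in>UNIV. laplacian E x y * f x * f y)"
  proof -
    have "laplacian E x y * f x * f y
        = (if x = y then real (degree E x) * (f x)^2 else 0) - adjacency E x y * f x * f y" for x y
      by (simp add: laplacian_def algebra_simps power2_eq_square)
    then show ?thesis by (simp add: sum_subtractf)
  qed
  finally show ?thesis by simp
qed

lemma rayleigh_eq_laplacian_quotient:
  fixes E :: "'v::finite set set"
  assumes sg: "simple_graph E" and f: "f \<in> supported_on B" "f \<noteq> 0"
  shows "rayleigh E B f = ereal ((f \<bullet> block_op (laplacian E) B f) / (f \<bullet> f))"
proof -
  have off: "f $ x = 0" if "x \<notin> B" for x using f that by (simp add: supported_on_def)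
  have "(\<Sum>e\<in>E. (\<Sum>(x, y)\<in>{(x, y). x \<in> e \<and> y \<in> e \<and> x \<noteq> y}. (f $ x - f $ y)^2) / 2)
      = (\<Sum>x\<in>UNIV. \<Sum>y\<in>UNIV. laplacian E x y * f $ x * f $ y)"
    by (simp add: sum_edges_eq_sum_adjacency[OF sg] adjacency_energy_eq_laplacian_form[OF sg]
        flip: sum_divide_distrib)
  also have "\<dots> = (\<Sum>x\<in>B. \<Sum>y\<in>UNIV. laplacian E x y * f $ x * f $ y)"
    by (rule sum_UNIV_eq_sum_vanishing_outside) (simp add: off)
  also have "\<dots> = (\<Sum>x\<in>B. \<Sum>y\<in>B. laplacian E x y * f $ x * f $ y)"
    by (intro sum.cong refl sum_UNIV_eq_sum_vanishing_outside) (simp add: off)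
  also have "\<dots> = f \<bullet> block_op (laplacian E) B f"
    by (simp add: inner_commute[of f] inner_block_op mult_ac)
  finally have num: "(\<Sum>e\<in>E. (\<Sum>(x, y)\<in>{(x, y). x \<in> e \<and> y \<in> e \<and> x \<noteq> y}. (f $ x - f $ y)^2) / 2)
      = f \<bullet> block_op (laplacian E) B f" .
  have den: "(\<Sum>x\<in>B. (f $ x)^2) = f \<bullet> f"
    using inner_supported_on[OF f(1)] by (simp add: power2_eq_square)
  have "\<not> (\<forall>x\<in>B. f $ x = 0)" using f off by (auto simp: vec_eq_iff)
  then show ?thesis by (simp add: rayleigh_def num den)
qed

lemma sum_diagonal_laplacian: "(\<Sum>x\<in>B. laplacian E x x) = real (\<Sum>v\<in>B. degree E v)"
  by (simp add: laplacian_def)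

lemma sum_squared_laplacian:
  fixes B :: "'v::finite set"
  assumes sg: "simple_graph E"
  shows "(\<Sum>x\<in>B. \<Sum>y\<in>B. (laplacian E x y)^2)
       = real (\<Sum>v\<in>B. (degree E v)^2) + real (\<Sum>v\<in>B. degree (induced_edges E B) v)"
proof -
  have "(laplacian E x y)^2 = (if x = y then (real (degree E x))^2 else 0) + adjacency E x y"
    for x y
    by (cases "x = y") (simp_all add: laplacian_def adjacency_def)
  then have "(\<Sum>x\<in>B. \<Sum>y\<in>B. (laplacian E x y)^2)
      = (\<Sum>x\<in>B. (real (degree E x))^2 + (\<Sum>y\<in>B. adjacency E x y))"
    by (simp add: sum.distrib)
  also have "\<dots> = (\<Sum>x\<in>B. (real (degree E x))^2 + real (degree (induced_edges E B) x))"
    by (simp add: degree_induced_edges_eq_sum_adjacency[OF sg])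
  finally show ?thesis by (simp add: sum.distrib)
qed

lemma laplacian_block_spectrum:
  fixes E :: "'v::finite set set"
  assumes sg: "simple_graph E"
  obtains U where "orthonormal_eigenbasis (block_op (laplacian E) B) (supported_on B) U"
    and "finite U" and "card U = card B"
    and "(\<Sum>u\<in>U. u \<bullet> block_op (laplacian E) B u) = real (\<Sum>v\<in>B. degree E v)"
    and "(\<Sum>u\<in>U. (u \<bullet> block_op (laplacian E) B u)^2)
           = real (\<Sum>v\<in>B. (degree E v)^2) + real (\<Sum>v\<in>B. degree (induced_edges E B) v)"
proof -
  obtain U where eig: "orthonormal_eigenbasis (block_op (laplacian E) B) (supported_on B) U"
    using block_op_orthonormal_eigenbasis[of B "laplacian E", OF laplacian_commute] by blast
  then have basis: "orthonormal_basis (supported_on B) U"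
    by (simp add: orthonormal_eigenbasis_def)
  show thesis
  proof (rule that[OF eig])
    show "finite U"
      using basis by (simp add: orthonormal_basis_def pairwise_orthogonal_imp_finite)
    show "card U = card B" by (rule card_orthonormal_basis_supported_on[OF basis])
    show "(\<Sum>u\<in>U. u \<bullet> block_op (laplacian E) B u) = real (\<Sum>v\<in>B. degree E v)"
      using trace_block_op[OF basis] sum_diagonal_laplacian by simp
    show "(\<Sum>u\<in>U. (u \<bullet> block_op (laplacian E) B u)^2)
        = real (\<Sum>v\<in>B. (degree E v)^2) + real (\<Sum>v\<in>B. degree (induced_edges E B) v)"
      using sum_squared_eigenvalues_block_op[of B "laplacian E", OF laplacian_commute eig]
        sum_squared_laplacian[OF sg] by simp
  qed
qed

lemma steklov_eig_le_eigenvalue_threshold: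
  fixes E :: "'v::finite set set"
  assumes sg: "simple_graph E"
    and eig: "orthonormal_eigenbasis (block_op (laplacian E) B) (supported_on B) U"
    and k: "k \<le> card {u\<in>U. u \<bullet> block_op (laplacian E) B u \<le> t}"
  shows "steklov_eig E B k \<le> ereal t"
proof -
  let ?L = "block_op (laplacian E) B"
  obtain Uk where Uk: "Uk \<subseteq> {u\<in>U. u \<bullet> ?L u \<le> t}" "card Uk = k"
    using k by (meson obtain_subset_with_card_n)
  have UkU: "Uk \<subseteq> U" using Uk(1) by auto
  have finUk: "finite Uk" and orth: "pairwise orthogonal Uk" and nrm: "\<forall>u\<in>Uk. norm u = 1"
    and eigUk: "\<forall>u\<in>Uk. ?L u = (u \<bullet> ?L u) *\<^sub>R u"
    using eig UkU pairwise_subset[of orthogonal U Uk] pairwise_orthogonal_imp_finite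
    by (auto simp: orthonormal_eigenbasis_def orthonormal_basis_def)
  have "0 \<notin> Uk" using nrm by force
  then have "dim (span Uk) = k"
    using Uk(2) pairwise_orthogonal_independent[OF orth] by (simp add: dim_eq_card_independent)
  then have "steklov_eig E B k \<le> (SUP f\<in>span Uk - {0}. rayleigh E B f)"
    unfolding steklov_eig_def by (intro INF_lower) auto
  also have "\<dots> \<le> ereal t"
  proof (rule SUP_least)
    fix f assume f: "f \<in> span Uk - {0}"
    have "span Uk \<subseteq> supported_on B"
      using eig UkU by (intro span_minimal subspace_supported_on)
        (auto simp: orthonormal_eigenbasis_def orthonormal_basis_def)
    then have "rayleigh E B f = ereal ((f \<bullet> ?L f) / (f \<bullet> f))"
      using f by (intro rayleigh_eq_laplacian_quotient sg) auto
    moreover have "f \<bullet> ?L f \<le> t * (f \<bullet> f)"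
      using f Uk(1) nrm eigUk
      by (intro quadratic_form_le_on_span_eigenvectors[OF linear_block_op finUk orth]) auto
    ultimately show "rayleigh E B f \<le> ereal t"
      using f by (simp add: pos_divide_le_eq)
  qed
  finally show ?thesis .
qed

theorem mainTheorem10:
  fixes E :: "('v::finite) set set" and B :: "'v set" and k :: nat
  assumes "simple_graph E"
    and "card B \<ge> 2"
    and "1 \<le> k" and "k \<le> card B"
  defines "S1 \<equiv> real (\<Sum>v\<in>B. degree E v)"
    and "S2 \<equiv> real (\<Sum>v\<in>B. (degree E v)^2)"
    and "S1' \<equiv> real (\<Sum>v\<in>B. degree (induced_edges E B) v)"
    and "b \<equiv> real (card B)"
  shows "steklov_eig E B k
           \<le> ereal ((S1 + sqrt ((real k - 1) / (b - real k + 1) * (b * (S2 + S1') - S1^2))) / b)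
       \<and> (S1 + sqrt ((real k - 1) / (b - real k + 1) * (b * (S2 + S1') - S1^2))) / b
           \<le> (S1 + sqrt ((real k - 1) / (b - real k + 1) * (b * (S2 + S1) - S1^2))) / b"
proof
  let ?L = "block_op (laplacian E) B"
  obtain U where eig: "orthonormal_eigenbasis ?L (supported_on B) U" and "finite U"
    and card: "card U = card B" and trace: "(\<Sum>u\<in>U. u \<bullet> ?L u) = S1"
    and trace_sq: "(\<Sum>u\<in>U. (u \<bullet> ?L u)^2) = S2 + S1'"
    using laplacian_block_spectrum[OF assms(1)] unfolding S1_def S2_def S1'_def by blast
  have "k \<le> card {u\<in>U. u \<bullet> ?L u
               \<le> (S1 + sqrt ((real k - 1) / (b - real k + 1) * (b * (S2 + S1') - S1^2))) / b}"
    using wolkowicz_styan_card_le[OF \<open>finite U\<close> assms(3), of "\<lambda>u. u \<bullet> ?L u"] assms(4)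
    unfolding trace trace_sq card b_def by simp
  then show "steklov_eig E B k
      \<le> ereal ((S1 + sqrt ((real k - 1) / (b - real k + 1) * (b * (S2 + S1') - S1^2))) / b)"
    by (rule steklov_eig_le_eigenvalue_threshold[OF assms(1) eig])
next
  have "S1' \<le> S1"
    unfolding S1'_def S1_def degree_def induced_edges_def
    by (intro of_nat_mono sum_mono card_mono) auto
  moreover have "0 \<le> (real k - 1) / (b - real k + 1)" and "b > 0"
    using assms(2-4) by (auto simp: b_def)
  ultimately show "(S1 + sqrt ((real k - 1) / (b - real k + 1) * (b * (S2 + S1') - S1^2))) / b
      \<le> (S1 + sqrt ((real k - 1) / (b - real k + 1) * (b * (S2 + S1) - S1^2))) / b"
    by (intro divide_right_mono add_left_mono real_sqrt_le_mono mult_left_mono) auto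
qed

end
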